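(* Let $N\ge3$ and $p>1$. For $\gamma>0$ let $R(\gamma)$ be the first positive zero of the solution $u(\cdot,\gamma)$ of (IVP$_\gamma$). Then $R(\gamma)\to\infty$ as $\gamma\downarrow0$.
   Context: $A(r)=\frac{2}{1+r^2}$, $p_{\rm S}=\frac{N+2}{N-2}$, $q=\frac{N-2}{2}(p-p_{\rm S})$. (IVP$_\gamma$): $u''+\frac{N-1}{r}u'+\frac{N(N-2)}{4}A(r)^2u+A(r)^{-q}|u|^{p-1}u=0$ on $(0,\infty)$, $u(0)=\gamma$, $u'(0)=0$. *)

theory Defs
  imports "HOL-Analysis.Analysis"
begin

definition A :: "real \<Rightarrow> real" where
  "A r = 2 / (1 + r\<^sup>2)"

definition pS :: "nat \<Rightarrow> real" where
  "pS N = (real N + 2) / (real N - 2)"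

definition qexp :: "nat \<Rightarrow> real \<Rightarrow> real" where
  "qexp N p = (real N - 2) / 2 * (p - pS N)"

definition solves_IVP :: "nat \<Rightarrow> real \<Rightarrow> real \<Rightarrow> (real \<Rightarrow> real) \<Rightarrow> bool" where
  "solves_IVP N p \<gamma> u \<longleftrightarrow>
     continuous_on {0..} u \<and> u 0 = \<gamma> \<and> (u has_real_derivative 0) (at 0 within {0..}) \<and>
     (\<exists>u' u''. \<forall>r>0. (u has_real_derivative u' r) (at r) \<and>
        (u' has_real_derivative u'' r) (at r) \<and>
        u'' r + (real N - 1) / r * u' r + real N * (real N - 2) / 4 * (A r)\<^sup>2 * u r
          + A r powr (- qexp N p) * (\<bar>u r\<bar> powr (p - 1) * u r) = 0)"

text \<open>First positive zero, as an extended real (infinity if there is no positive zero).\<close>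
definition first_zero :: "(real \<Rightarrow> real) \<Rightarrow> ereal" where
  "first_zero u = Inf (ereal ` {r. r > 0 \<and> u r = 0})"

end

theory Submission
  imports Defs
begin

text \<open>
  The function \<open>\<phi>(r) = (1 + r\<^sup>2) powr (1 - N/2)\<close>, a constant multiple of
  \<open>A(r) powr ((N - 2)/2)\<close>, solves the linear part of the equation. Hence for a solution \<open>u\<close>
  the weighted Wronskian \<open>W = r\<^sup>N\<^sup>-\<^sup>1 (\<phi> u' - \<phi>' u)\<close> satisfies
  \<open>W' = - r\<^sup>N\<^sup>-\<^sup>1 \<phi> A\<^sup>-\<^sup>q |u|\<^sup>p\<^sup>-\<^sup>1 u\<close> and \<open>W(0+) = 0\<close>, while
  \<open>(u/\<phi>)' = W / (r\<^sup>N\<^sup>-\<^sup>1 \<phi>\<^sup>2)\<close>. As long as \<open>u > 0\<close> we get \<open>W \<le> 0\<close>, hence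
  \<open>u \<le> u/\<phi> \<le> \<gamma>\<close>, hence \<open>W \<ge> - r\<^sup>N K \<gamma>\<^sup>p\<close> with \<open>K\<close> a bound for \<open>A\<^sup>-\<^sup>q\<close> on
  \<open>[0, R]\<close>, and integrating again \<open>u/\<phi> \<ge> \<gamma> - \<gamma>\<^sup>p K R\<^sup>2 / \<phi>(R)\<^sup>2\<close> on \<open>[0, R]\<close>.
  Since \<open>p > 1\<close>, the right-hand side is positive for small \<open>\<gamma>\<close>, so \<open>u\<close> has no zero in
  \<open>[0, R]\<close>.
\<close>

definition phi :: "nat \<Rightarrow> real \<Rightarrow> real" where
  "phi N r = (1 + r\<^sup>2) powr (1 - real N / 2)"

definition phi' :: "nat \<Rightarrow> real \<Rightarrow> real" where
  "phi' N r = - (real N - 2) * r * phi N r / (1 + r\<^sup>2)"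

lemma one_plus_square_pos: "0 < 1 + (r::real)\<^sup>2"
  by (simp add: add_pos_nonneg)

lemma A_pos: "0 < A r"
  using one_plus_square_pos[of r] by (simp add: A_def)

lemma A_powr_bounded:
  fixes a b e :: real
  obtains K where "\<And>x. a \<le> x \<Longrightarrow> x \<le> b \<Longrightarrow> A x powr e \<le> K"
proof -
  have "continuous_on {a..b} (\<lambda>x. A x powr e)"
    unfolding A_def by (intro continuous_intros) (auto simp: add_nonneg_eq_0_iff)
  then obtain K where "\<And>x. x \<in> {a..b} \<Longrightarrow> norm (A x powr e) \<le> K"
    using continuous_on_compact_bound[OF compact_Icc] by blast
  then show thesis
    by (intro that) (auto dest: abs_le_D1)
qed

lemma phi_pos: "0 < phi N r"
  using one_plus_square_pos[of r] by (simp add: phi_def)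

lemma phi_le_one: "N \<ge> 2 \<Longrightarrow> phi N r \<le> 1"
  using one_plus_square_pos[of r] powr_mono[of "1 - real N / 2" 0 "1 + r\<^sup>2"]
  by (simp add: phi_def)

lemma phi_antimono: "N \<ge> 2 \<Longrightarrow> 0 \<le> r \<Longrightarrow> r \<le> s \<Longrightarrow> phi N s \<le> phi N r"
  unfolding phi_def by (rule powr_mono2') (auto intro: power_mono simp: add_pos_nonneg)

lemma abs_phi'_le:
  assumes "N \<ge> 2" "0 \<le> r"
  shows "\<bar>phi' N r\<bar> \<le> (real N - 2) * r"
proof -
  have "phi N r \<le> 1 + r\<^sup>2"
    using phi_le_one[OF assms(1), of r] zero_le_power2[of r] by linarith
  then have "phi N r / (1 + r\<^sup>2) \<le> 1"
    by (subst pos_divide_le_eq[OF one_plus_square_pos]) simp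
  then have "(real N - 2) * r * (phi N r / (1 + r\<^sup>2)) \<le> (real N - 2) * r"
    using assms by (intro mult_left_le) auto
  then show ?thesis
    using assms phi_pos[of N r] one_plus_square_pos[of r] by (simp add: phi'_def abs_mult)
qed

lemma phi_has_derivative: "(phi N has_real_derivative phi' N r) (at r)"
proof -
  have "(phi N has_real_derivative (1 - real N / 2) * (2 * r) * phi N r / (1 + r\<^sup>2)) (at r)"
    unfolding phi_def[abs_def]
    by (rule DERIV_powr[where f="\<lambda>_. 1 - real N / 2", THEN DERIV_cong])
       (auto intro!: derivative_eq_intros simp: one_plus_square_pos field_simps)
  moreover have "(1 - real N / 2) * (2 * r) = - (real N - 2) * r"
    by (simp add: algebra_simps)
  ultimately show ?thesis
    by (simp add: phi'_def)
qed

lemma phi_solves_linear_equation: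
  assumes "r \<noteq> 0"
  shows "(phi' N has_real_derivative
           - ((real N - 1) / r * phi' N r + real N * (real N - 2) / 4 * (A r)\<^sup>2 * phi N r)) (at r)"
proof -
  define t where "t = 1 + r\<^sup>2"
  have "t \<noteq> 0"
    using one_plus_square_pos[of r] by (simp add: t_def)
  have "((\<lambda>s. - (real N - 2) * s * phi N s / (1 + s\<^sup>2)) has_real_derivative
      ((- (real N - 2) * phi N r - (real N - 2) * r * phi' N r) * t + (real N - 2) * r * phi N r * (2 * r))
        / t\<^sup>2) (at r)"
    using \<open>t \<noteq> 0\<close> unfolding t_def
    by (auto intro!: derivative_eq_intros phi_has_derivative simp: field_simps power2_eq_square)
  also have "(\<lambda>s. - (real N - 2) * s * phi N s / (1 + s\<^sup>2)) = phi' N"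
    by (simp add: fun_eq_iff phi'_def)
  also have "((- (real N - 2) * phi N r - (real N - 2) * r * phi' N r) * t
        + (real N - 2) * r * phi N r * (2 * r)) / t\<^sup>2
      = - ((real N - 1) / r * phi' N r + real N * (real N - 2) / 4 * (A r)\<^sup>2 * phi N r)"
    using assms \<open>t \<noteq> 0\<close> unfolding phi'_def A_def t_def[symmetric]
    by (simp add: field_simps power2_eq_square) (simp add: t_def algebra_simps power2_eq_square)
  finally show ?thesis .
qed

lemma right_limit_plus_slope_le:
  fixes f f' :: "real \<Rightarrow> real"
  assumes lim: "(f \<longlongrightarrow> L) (at_right 0)" and "0 < r"
    and deriv: "\<And>x. 0 < x \<Longrightarrow> x \<le> r \<Longrightarrow> (f has_real_derivative f' x) (at x)"
    and slope: "\<And>x. 0 < x \<Longrightarrow> x < r \<Longrightarrow> m \<le> f' x"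
  shows "L + m * r \<le> f r"
proof (rule tendsto_upperbound)
  show "((\<lambda>s. f s + m * (r - s)) \<longlongrightarrow> L + m * r) (at_right 0)"
    by (auto intro!: tendsto_eq_intros lim)
  show "\<forall>\<^sub>F s in at_right 0. f s + m * (r - s) \<le> f r"
    unfolding eventually_at_right_field
  proof (intro exI[of _ r] conjI allI impI)
    fix s assume s: "0 < s" "s < r"
    then obtain e where e: "s < e" "e < r" "f r - f s = (r - s) * f' e"
      using MVT2[of s r f f'] deriv by force
    have "m * (r - s) \<le> f' e * (r - s)"
      using slope[of e] e s by (intro mult_right_mono) auto
    then show "f s + m * (r - s) \<le> f r"
      using e(3) by (simp add: algebra_simps)
  qed fact
qed simp

lemma le_right_limit_plus_slope:
  fixes f f' :: "real \<Rightarrow> real"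
  assumes "(f \<longlongrightarrow> L) (at_right 0)" and "0 < r"
    and "\<And>x. 0 < x \<Longrightarrow> x \<le> r \<Longrightarrow> (f has_real_derivative f' x) (at x)"
    and "\<And>x. 0 < x \<Longrightarrow> x < r \<Longrightarrow> f' x \<le> M"
  shows "f r \<le> L + M * r"
proof -
  have "- L + (- M) * r \<le> - f r"
    using assms by (intro right_limit_plus_slope_le[of "\<lambda>x. - f x" _ _ "\<lambda>x. - f' x"])
      (auto intro: tendsto_minus DERIV_minus)
  then show ?thesis by simp
qed

lemma tendsto_zero_at_right_by_samples:
  fixes f f' :: "real \<Rightarrow> real"
  assumes "0 < b"
    and deriv: "\<And>x. 0 < x \<Longrightarrow> x < b \<Longrightarrow> (f has_real_derivative f' x) (at x)"
    and bounded: "\<And>x. 0 < x \<Longrightarrow> x < b \<Longrightarrow> \<bar>f' x\<bar> \<le> C"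
    and samples: "\<forall>\<^sub>F s in at_right 0. \<exists>\<xi>. 0 < \<xi> \<and> \<xi> < s \<and> \<bar>f \<xi>\<bar> \<le> D * s"
  shows "(f \<longlongrightarrow> 0) (at_right 0)"
proof (rule Lim_null_comparison)
  show "\<forall>\<^sub>F s in at_right 0. norm (f s) \<le> (C + D) * s"
    using samples eventually_at_right_real[OF \<open>0 < b\<close>]
  proof eventually_elim
    case (elim s)
    then have "0 < s" "s < b" by auto
    from elim obtain \<xi> where \<xi>: "0 < \<xi>" "\<xi> < s" "\<bar>f \<xi>\<bar> \<le> D * s" by blast
    then obtain e where e: "\<xi> < e" "e < s" "f s - f \<xi> = (s - \<xi>) * f' e"
      using MVT2[of \<xi> s f f'] deriv \<open>s < b\<close> by force
    have "\<bar>f s - f \<xi>\<bar> \<le> s * C"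
      using e \<xi> bounded[of e] \<open>s < b\<close> by (auto simp: abs_mult intro!: mult_mono)
    then show ?case
      using \<xi> by (simp add: algebra_simps)
  qed
  show "((\<lambda>s. (C + D) * s) \<longlongrightarrow> 0) (at_right 0)"
    by (auto intro!: tendsto_eq_intros)
qed

lemma derivative_samples_near_zero:
  fixes u u' :: "real \<Rightarrow> real"
  assumes d0: "(u has_real_derivative 0) (at 0 within {0..})"
    and du: "\<And>x. 0 < x \<Longrightarrow> (u has_real_derivative u' x) (at x)"
    and "0 < \<epsilon>"
  shows "\<forall>\<^sub>F s in at_right 0. \<exists>\<xi>. 0 < \<xi> \<and> \<xi> < s \<and> \<bar>u' \<xi>\<bar> \<le> \<epsilon>"
proof -
  have "((\<lambda>y. (u y - u 0) / (y - 0)) \<longlongrightarrow> 0) (at 0 within {0..})"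
    using d0 by (simp add: has_field_derivative_iff)
  then have "\<forall>\<^sub>F y in at 0 within {0..}. dist ((u y - u 0) / (y - 0)) 0 < \<epsilon> / 3"
    using \<open>0 < \<epsilon>\<close> by (intro tendstoD) simp_all
  then obtain d where d: "0 < d"
    and small: "\<And>y. 0 < y \<Longrightarrow> y < d \<Longrightarrow> \<bar>u y - u 0\<bar> < \<epsilon> / 3 * y"
    unfolding eventually_at by (auto simp: dist_real_def abs_div pos_divide_less_eq)
  show ?thesis
    unfolding eventually_at_right_field
  proof (rule exI[of _ d], intro conjI allI impI)
    fix s :: real assume s: "0 < s" "s < d"
    then obtain \<xi> where \<xi>: "s / 2 < \<xi>" "\<xi> < s" "u s - u (s / 2) = (s - s / 2) * u' \<xi>"
      using MVT2[of "s / 2" s u u'] du by force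
    have "\<bar>u s - u 0\<bar> < \<epsilon> / 3 * s" "\<bar>u (s / 2) - u 0\<bar> < \<epsilon> / 3 * (s / 2)"
      using small[of s] small[of "s / 2"] s by auto
    then have "\<bar>u s - u (s / 2)\<bar> < \<epsilon> / 3 * s + \<epsilon> / 3 * (s / 2)"
      unfolding abs_less_iff by linarith
    then have "\<bar>u' \<xi>\<bar> * (s / 2) < \<epsilon> * (s / 2)"
      using \<xi>(3) s by (simp add: abs_mult algebra_simps)
    then show "\<exists>\<xi>. 0 < \<xi> \<and> \<xi> < s \<and> \<bar>u' \<xi>\<bar> \<le> \<epsilon>"
      using \<xi> s by (intro exI[of _ \<xi>]) (auto simp: mult_less_cancel_right)
  qed fact
qed

lemma weighted_wronskian_has_derivative:
  fixes w w' u u' :: "real \<Rightarrow> real" and k :: nat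
  assumes "0 < r"
    and "(w has_real_derivative w' r) (at r)" "(w' has_real_derivative w'') (at r)"
    and "(u has_real_derivative u' r) (at r)" "(u' has_real_derivative u'') (at r)"
  shows "((\<lambda>s. s ^ k * (w s * u' s - w' s * u s)) has_real_derivative
           r ^ k * (w r * (u'' + k / r * u' r) - u r * (w'' + k / r * w' r))) (at r)"
proof -
  have "real k * r ^ (k - 1) = k / r * r ^ k"
    using \<open>0 < r\<close> by (cases k) auto
  then show ?thesis
    using assms by (auto intro!: derivative_eq_intros simp: algebra_simps)
qed

lemma powr_pred_mult_self: "0 \<le> x \<Longrightarrow> x powr (p - 1) * x = x powr (p::real)"
  using powr_mult_base[of x "p - 1"] by (simp add: mult.commute)

lemma ereal_le_first_zero:
  assumes "\<And>x. 0 < x \<Longrightarrow> x \<le> R \<Longrightarrow> u x \<noteq> 0"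
  shows "ereal R \<le> first_zero u"
  unfolding first_zero_def
  using assms by (intro Inf_greatest) (force simp: not_le)

context
  fixes N :: nat and p \<gamma> :: real and u u' u'' :: "real \<Rightarrow> real"
  assumes N: "2 \<le> N" and p: "0 \<le> p" and \<gamma>: "0 < \<gamma>"
    and cont: "continuous_on {0..} u" and u0: "u 0 = \<gamma>"
    and d0: "(u has_real_derivative 0) (at 0 within {0..})"
    and du: "\<And>r. 0 < r \<Longrightarrow> (u has_real_derivative u' r) (at r)"
    and ddu: "\<And>r. 0 < r \<Longrightarrow> (u' has_real_derivative u'' r) (at r)"
    and ode: "\<And>r. 0 < r \<Longrightarrow> u'' r + (real N - 1) / r * u' r
      + real N * (real N - 2) / 4 * (A r)\<^sup>2 * u r
      + A r powr (- qexp N p) * (\<bar>u r\<bar> powr (p - 1) * u r) = 0"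
begin

definition wronskian :: "real \<Rightarrow> real" where
  "wronskian r = r ^ (N - 1) * (phi N r * u' r - phi' N r * u r)"

definition ratio :: "real \<Rightarrow> real" where
  "ratio r = u r / phi N r"

lemma wronskian_has_derivative:
  assumes "0 < r"
  shows "(wronskian has_real_derivative
           - (r ^ (N - 1) * phi N r * (A r powr (- qexp N p) * (\<bar>u r\<bar> powr (p - 1) * u r)))) (at r)"
proof -
  let ?c = "real N * (real N - 2) / 4 * (A r)\<^sup>2"
  have k: "real (N - 1) = real N - 1"
    using N by (simp add: of_nat_diff)
  have "(wronskian has_real_derivative
      r ^ (N - 1) * (phi N r * (u'' r + real (N - 1) / r * u' r)
        - u r * (- ((real N - 1) / r * phi' N r + ?c * phi N r) + real (N - 1) / r * phi' N r))) (at r)"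
    unfolding wronskian_def[abs_def]
    using assms by (intro weighted_wronskian_has_derivative phi_has_derivative
        phi_solves_linear_equation du ddu) auto
  also have "r ^ (N - 1) * (phi N r * (u'' r + real (N - 1) / r * u' r)
        - u r * (- ((real N - 1) / r * phi' N r + ?c * phi N r) + real (N - 1) / r * phi' N r))
      = r ^ (N - 1) * phi N r * (u'' r + (real N - 1) / r * u' r + ?c * u r)"
    unfolding k by (simp add: algebra_simps)
  also have "u'' r + (real N - 1) / r * u' r + ?c * u r
      = - (A r powr (- qexp N p) * (\<bar>u r\<bar> powr (p - 1) * u r))"
    using ode[OF assms] by linarith
  finally show ?thesis
    by simp
qed

lemma ratio_has_derivative:
  assumes "0 < r"
  shows "(ratio has_real_derivative wronskian r / (r ^ (N - 1) * (phi N r)\<^sup>2)) (at r)"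
proof -
  have "(ratio has_real_derivative (u' r * phi N r - u r * phi' N r) / (phi N r * phi N r)) (at r)"
    unfolding ratio_def[abs_def]
    by (rule DERIV_divide[OF du[OF assms] phi_has_derivative]) (use phi_pos[of N r] in simp)
  moreover have "wronskian r / (r ^ (N - 1) * (phi N r)\<^sup>2)
      = (u' r * phi N r - u r * phi' N r) / (phi N r * phi N r)"
    using assms phi_pos[of N r] by (simp add: wronskian_def power2_eq_square field_simps)
  ultimately show ?thesis
    by simp
qed

lemma ratio_tendsto: "(ratio \<longlongrightarrow> \<gamma>) (at_right 0)"
proof -
  have "(u \<longlongrightarrow> \<gamma>) (at_right 0)"
    using cont u0 by (auto simp: continuous_on_def intro: tendsto_within_subset)
  moreover have "(phi N \<longlongrightarrow> 1) (at_right 0)"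
    using DERIV_isCont[OF phi_has_derivative[of N 0]]
    by (auto simp: isCont_def phi_def intro: tendsto_within_subset)
  ultimately show ?thesis
    unfolding ratio_def[abs_def] using tendsto_divide[of u \<gamma> _ "phi N" 1] by simp
qed

lemma solution_bounded_near_zero:
  obtains M where "0 \<le> M" "\<And>x. 0 \<le> x \<Longrightarrow> x \<le> 1 \<Longrightarrow> \<bar>u x\<bar> \<le> M"
proof -
  have "continuous_on {0..1} u"
    using cont by (rule continuous_on_subset) auto
  then show thesis
    using continuous_on_compact_bound[OF compact_Icc] that by (metis atLeastAtMost_iff real_norm_def)
qed

lemma wronskian_derivative_bounded_near_zero:
  obtains C where "\<And>x. 0 < x \<Longrightarrow> x < 1 \<Longrightarrow>
    \<bar>x ^ (N - 1) * phi N x * (A x powr (- qexp N p) * (\<bar>u x\<bar> powr (p - 1) * u x))\<bar> \<le> C"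
proof -
  obtain M where M: "\<And>x. 0 \<le> x \<Longrightarrow> x \<le> 1 \<Longrightarrow> \<bar>u x\<bar> \<le> M"
    using solution_bounded_near_zero by blast
  obtain K where K: "\<And>x. 0 \<le> x \<Longrightarrow> x \<le> 1 \<Longrightarrow> A x powr (- qexp N p) \<le> K"
    using A_powr_bounded by blast
  have "\<bar>x ^ (N - 1) * phi N x * (A x powr (- qexp N p) * (\<bar>u x\<bar> powr (p - 1) * u x))\<bar>
      \<le> 1 * (K * M powr p)" if "0 < x" "x < 1" for x
  proof -
    have "\<bar>A x powr (- qexp N p)\<bar> \<le> K"
      using K[of x] A_pos[of x] that by simp
    moreover from this have "0 \<le> K"
      by (rule order_trans[OF abs_ge_zero])
    moreover have "\<bar>x ^ (N - 1) * phi N x\<bar> \<le> 1"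
      using that phi_pos[of N x] phi_le_one[OF N, of x]
      by (auto simp: abs_mult intro!: mult_le_one power_le_one)
    moreover have "\<bar>u x\<bar> powr p \<le> M powr p"
      using M[of x] that p by (auto intro: powr_mono2)
    ultimately have "\<bar>x ^ (N - 1) * phi N x\<bar> * (\<bar>A x powr (- qexp N p)\<bar> * \<bar>u x\<bar> powr p)
        \<le> 1 * (K * M powr p)"
      by (intro mult_mono) auto
    then show ?thesis
      by (simp add: abs_mult powr_pred_mult_self)
  qed
  then show thesis
    using that by auto
qed

lemma wronskian_samples_near_zero:
  obtains D where "\<forall>\<^sub>F s in at_right 0. \<exists>\<xi>. 0 < \<xi> \<and> \<xi> < s \<and> \<bar>wronskian \<xi>\<bar> \<le> D * s"
proof -
  obtain M where "0 \<le> M" and M: "\<And>x. 0 \<le> x \<Longrightarrow> x \<le> 1 \<Longrightarrow> \<bar>u x\<bar> \<le> M"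
    using solution_bounded_near_zero by blast
  have "\<forall>\<^sub>F s in at_right 0. \<exists>\<xi>. 0 < \<xi> \<and> \<xi> < s \<and> \<bar>u' \<xi>\<bar> \<le> 1"
    by (rule derivative_samples_near_zero[OF d0 du]) simp_all
  moreover have "\<forall>\<^sub>F s in at_right 0. s \<in> {0<..<1::real}"
    by (rule eventually_at_right_real) simp
  ultimately have "\<forall>\<^sub>F s in at_right 0. \<exists>\<xi>. 0 < \<xi> \<and> \<xi> < s \<and>
      \<bar>wronskian \<xi>\<bar> \<le> (1 + (real N - 2) * M) * s"
  proof eventually_elim
    case (elim s)
    then obtain \<xi> where \<xi>: "0 < \<xi>" "\<xi> < s" "\<bar>u' \<xi>\<bar> \<le> 1" "s < 1" by auto
    have "\<xi> ^ (N - 1) \<le> \<xi> ^ 1"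
      using \<xi> N by (intro power_decreasing) auto
    then have "\<xi> ^ (N - 1) \<le> s"
      using \<xi> by simp
    moreover have "\<bar>phi N \<xi> * u' \<xi>\<bar> \<le> 1"
      using \<xi> phi_pos[of N \<xi>] phi_le_one[OF N, of \<xi>] by (auto simp: abs_mult intro: mult_le_one)
    moreover have "\<bar>phi' N \<xi>\<bar> \<le> real N - 2"
      using abs_phi'_le[OF N, of \<xi>] mult_left_le[of \<xi> "real N - 2"] \<xi> N by auto
    then have "\<bar>phi' N \<xi> * u \<xi>\<bar> \<le> (real N - 2) * M"
      unfolding abs_mult using M[of \<xi>] \<xi> by (intro mult_mono) auto
    ultimately have "\<xi> ^ (N - 1) * \<bar>phi N \<xi> * u' \<xi> - phi' N \<xi> * u \<xi>\<bar> \<le> s * (1 + (real N - 2) * M)"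
      using \<xi> abs_triangle_ineq4[of "phi N \<xi> * u' \<xi>" "phi' N \<xi> * u \<xi>"] by (intro mult_mono) auto
    then show ?case
      using \<xi> by (intro exI[of _ \<xi>]) (simp add: wronskian_def abs_mult mult.commute)
  qed
  then show thesis
    by (rule that)
qed

text \<open>
  \<open>u'\<close> need not extend continuously to \<open>0\<close>; instead \<open>W\<close> is Lipschitz near \<open>0\<close> and
  small at points where \<open>u'\<close> is small, which exist arbitrarily close to \<open>0\<close> because \<open>u'(0) = 0\<close>.
\<close>

lemma wronskian_tendsto_zero: "(wronskian \<longlongrightarrow> 0) (at_right 0)"
proof -
  obtain C where "\<And>x. 0 < x \<Longrightarrow> x < 1 \<Longrightarrow>
      \<bar>x ^ (N - 1) * phi N x * (A x powr (- qexp N p) * (\<bar>u x\<bar> powr (p - 1) * u x))\<bar> \<le> C"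
    using wronskian_derivative_bounded_near_zero by blast
  moreover obtain D where "\<forall>\<^sub>F s in at_right 0. \<exists>\<xi>. 0 < \<xi> \<and> \<xi> < s \<and> \<bar>wronskian \<xi>\<bar> \<le> D * s"
    using wronskian_samples_near_zero by blast
  ultimately show ?thesis
    by (intro tendsto_zero_at_right_by_samples[OF zero_less_one wronskian_has_derivative]) auto
qed

lemma wronskian_nonpos:
  assumes pos: "\<And>x. 0 \<le> x \<Longrightarrow> x < z \<Longrightarrow> 0 < u x" and r: "0 < r" "r < z"
  shows "wronskian r \<le> 0"
proof -
  have "0 \<le> x ^ (N - 1) * phi N x * (A x powr (- qexp N p) * (\<bar>u x\<bar> powr (p - 1) * u x))"
    if "0 < x" "x < r" for x
    using that r pos[of x] phi_pos[of N x] by (intro mult_nonneg_nonneg) auto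
  then show ?thesis
    using le_right_limit_plus_slope[OF wronskian_tendsto_zero r(1) wronskian_has_derivative, of 0]
    by simp
qed

lemma solution_le_initial_value:
  assumes pos: "\<And>x. 0 \<le> x \<Longrightarrow> x < z \<Longrightarrow> 0 < u x" and r: "0 < r" "r < z"
  shows "u r \<le> \<gamma>"
proof -
  have "wronskian x / (x ^ (N - 1) * (phi N x)\<^sup>2) \<le> 0" if "0 < x" "x < r" for x
    using wronskian_nonpos[OF pos, where r=x] that r phi_pos[of N x]
    by (intro divide_nonpos_pos) auto
  then have "ratio r \<le> \<gamma>"
    using le_right_limit_plus_slope[OF ratio_tendsto r(1) ratio_has_derivative, of 0] by simp
  moreover have "u r \<le> ratio r"
    using pos[of r] r phi_pos[of N r] phi_le_one[OF N, of r]
    by (simp add: ratio_def le_divide_eq)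
  ultimately show ?thesis
    by simp
qed

lemma wronskian_lower_bound:
  assumes pos: "\<And>x. 0 \<le> x \<Longrightarrow> x < z \<Longrightarrow> 0 < u x"
    and K: "\<And>x. 0 < x \<Longrightarrow> x < z \<Longrightarrow> A x powr (- qexp N p) \<le> K"
    and r: "0 < r" "r < z"
  shows "- (r ^ N * (K * \<gamma> powr p)) \<le> wronskian r"
proof -
  have "- (r ^ (N - 1) * (K * \<gamma> powr p))
      \<le> - (x ^ (N - 1) * phi N x * (A x powr (- qexp N p) * (\<bar>u x\<bar> powr (p - 1) * u x)))"
    if x: "0 < x" "x < r" for x
  proof -
    have "\<bar>u x\<bar> powr (p - 1) * u x \<le> \<gamma> powr p"
      using pos[of x] solution_le_initial_value[OF pos, where r=x] x r p
      by (simp add: powr_pred_mult_self powr_mono2)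
    moreover have "0 < A x powr (- qexp N p)"
      using A_pos[of x] by simp
    then have "0 \<le> K"
      using K[of x] x r by linarith
    ultimately have nonlinear: "A x powr (- qexp N p) * (\<bar>u x\<bar> powr (p - 1) * u x) \<le> K * \<gamma> powr p"
      using K[of x] pos[of x] x r by (intro mult_mono) auto
    have weight: "x ^ (N - 1) * phi N x \<le> r ^ (N - 1) * 1"
      using x phi_le_one[OF N, of x] phi_pos[of N x] by (intro mult_mono power_mono) auto
    have "x ^ (N - 1) * phi N x * (A x powr (- qexp N p) * (\<bar>u x\<bar> powr (p - 1) * u x))
        \<le> r ^ (N - 1) * 1 * (K * \<gamma> powr p)"
      by (rule mult_mono[OF weight nonlinear]) (use pos[of x] x r A_pos[of x] in auto)
    then show ?thesis
      by simp
  qed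
  then have "0 + - (r ^ (N - 1) * (K * \<gamma> powr p)) * r \<le> wronskian r"
    by (intro right_limit_plus_slope_le[OF wronskian_tendsto_zero r(1) wronskian_has_derivative]) auto
  moreover have "r ^ N = r ^ (N - 1) * r"
    using N by (cases N) auto
  ultimately show ?thesis
    by (simp add: mult_ac)
qed

lemma ratio_lower_bound:
  assumes pos: "\<And>x. 0 \<le> x \<Longrightarrow> x < z \<Longrightarrow> 0 < u x"
    and K: "\<And>x. 0 < x \<Longrightarrow> x < z \<Longrightarrow> A x powr (- qexp N p) \<le> K"
    and z: "0 < z" "z \<le> R"
  shows "\<gamma> - \<gamma> powr p * K * R\<^sup>2 / (phi N R)\<^sup>2 \<le> ratio z"
proof -
  define G where "G = K * \<gamma> powr p"
  have "0 < A (z / 2) powr (- qexp N p)"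
    using A_pos[of "z / 2"] by simp
  then have "0 \<le> K"
    using K[of "z / 2"] z by linarith
  then have "0 \<le> G"
    by (simp add: G_def)
  have "- (R * G / (phi N R)\<^sup>2) \<le> wronskian x / (x ^ (N - 1) * (phi N x)\<^sup>2)"
    if x: "0 < x" "x < z" for x
  proof -
    have "- (x * G / (phi N x)\<^sup>2) = - (x ^ N * G) / (x ^ (N - 1) * (phi N x)\<^sup>2)"
      using x N by (cases N) (auto simp: field_simps)
    also have "\<dots> \<le> wronskian x / (x ^ (N - 1) * (phi N x)\<^sup>2)"
      using wronskian_lower_bound[OF pos K x] x phi_pos[of N x]
      by (intro divide_right_mono) (auto simp: G_def mult_ac)
    finally have "- (x * G / (phi N x)\<^sup>2) \<le> wronskian x / (x ^ (N - 1) * (phi N x)\<^sup>2)" .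
    moreover have "x * G / (phi N x)\<^sup>2 \<le> R * G / (phi N R)\<^sup>2"
      using x z \<open>0 \<le> G\<close> phi_pos[of N R] phi_antimono[OF N, of x R]
      by (intro frac_le mult_right_mono power_mono) auto
    ultimately show ?thesis
      by linarith
  qed
  then have "\<gamma> + - (R * G / (phi N R)\<^sup>2) * z \<le> ratio z"
    by (intro right_limit_plus_slope_le[OF ratio_tendsto z(1) ratio_has_derivative]) auto
  moreover have "z * (R * G / (phi N R)\<^sup>2) \<le> R * (R * G / (phi N R)\<^sup>2)"
    using z \<open>0 \<le> G\<close> by (intro mult_right_mono) auto
  ultimately show ?thesis
    by (simp add: G_def power2_eq_square algebra_simps)
qed

lemma solution_positive:
  assumes "0 < R"
    and K: "\<And>x. 0 \<le> x \<Longrightarrow> x \<le> R \<Longrightarrow> A x powr (- qexp N p) \<le> K"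
    and small: "\<gamma> powr (p - 1) * K * R\<^sup>2 < (phi N R)\<^sup>2"
    and r: "0 \<le> r" "r \<le> R"
  shows "0 < u r"
proof (rule ccontr)
  assume "\<not> 0 < u r"
  define S where "S = {0..R} \<inter> u -` {..0}"
  have "r \<in> S"
    using r \<open>\<not> 0 < u r\<close> by (simp add: S_def)
  moreover have "closed S"
    unfolding S_def using cont
    by (intro continuous_closed_preimage) (auto intro: continuous_on_subset)
  ultimately have "Inf S \<in> S"
    by (intro closed_contains_Inf) (auto simp: S_def bdd_below_def)
  define z where "z = Inf S"
  have z: "0 \<le> z" "z \<le> R" "u z \<le> 0"
    using \<open>Inf S \<in> S\<close> by (auto simp: S_def z_def)
  have pos: "0 < u x" if "0 \<le> x" "x < z" for x
    using that z cInf_lower[of x S] by (force simp: S_def z_def)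
  have "0 < z"
    using z u0 \<gamma> by (cases "z = 0") auto
  have "0 < \<gamma> - \<gamma> powr p * K * R\<^sup>2 / (phi N R)\<^sup>2"
  proof -
    have "\<gamma> powr p * K * R\<^sup>2 = \<gamma> * (\<gamma> powr (p - 1) * K * R\<^sup>2)"
      using \<gamma> by (simp add: powr_diff)
    also have "\<dots> < \<gamma> * (phi N R)\<^sup>2"
      using small \<gamma> by simp
    finally show ?thesis
      using phi_pos[of N R] by (simp add: field_simps)
  qed
  also have "\<dots> \<le> ratio z"
    using K \<open>0 < z\<close> z by (intro ratio_lower_bound[OF pos]) auto
  finally show False
    using z phi_pos[of N z] by (simp add: ratio_def divide_pos_pos zero_less_divide_iff)
qed

end

lemma solves_IVP_positive:
  assumes "2 \<le> N" "0 \<le> p" "0 < \<gamma>" "solves_IVP N p \<gamma> u" "0 < R"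
    and "\<And>x. 0 \<le> x \<Longrightarrow> x \<le> R \<Longrightarrow> A x powr (- qexp N p) \<le> K"
    and "\<gamma> powr (p - 1) * K * R\<^sup>2 < (phi N R)\<^sup>2"
    and "0 \<le> r" "r \<le> R"
  shows "0 < u r"
proof -
  obtain u' u'' where "continuous_on {0..} u" "u 0 = \<gamma>" "(u has_real_derivative 0) (at 0 within {0..})"
    "\<forall>r>0. (u has_real_derivative u' r) (at r) \<and> (u' has_real_derivative u'' r) (at r) \<and>
      u'' r + (real N - 1) / r * u' r + real N * (real N - 2) / 4 * (A r)\<^sup>2 * u r
        + A r powr (- qexp N p) * (\<bar>u r\<bar> powr (p - 1) * u r) = 0"
    using assms(4) unfolding solves_IVP_def by blast
  then show ?thesis
    using assms by (intro solution_positive[of N p \<gamma> u u' u'' R K]) auto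
qed

lemma eventually_solves_IVP_positive_on:
  assumes "2 \<le> N" "1 < p" "0 < R"
    and "\<And>\<gamma>. 0 < \<gamma> \<Longrightarrow> solves_IVP N p \<gamma> (U \<gamma>)"
  shows "\<forall>\<^sub>F \<gamma> in at_right 0. \<forall>x. 0 \<le> x \<and> x \<le> R \<longrightarrow> 0 < U \<gamma> x"
proof -
  obtain K where K: "\<And>x. 0 \<le> x \<Longrightarrow> x \<le> R \<Longrightarrow> A x powr (- qexp N p) \<le> K"
    using A_powr_bounded by blast
  have "((\<lambda>\<gamma>. \<gamma> powr (p - 1) * K * R\<^sup>2) \<longlongrightarrow> 0 * K * R\<^sup>2) (at_right 0)"
    using \<open>1 < p\<close> by (intro tendsto_intros tendsto_zero_powrI[of _ _ _ "p - 1"])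
      (auto intro: tendsto_ident_at eventually_at_right_less[THEN eventually_mono])
  then have "\<forall>\<^sub>F \<gamma> in at_right 0. \<gamma> powr (p - 1) * K * R\<^sup>2 < (phi N R)\<^sup>2"
    using phi_pos[of N R] by (intro order_tendstoD) auto
  with eventually_at_right_less show ?thesis
  proof eventually_elim
    case (elim \<gamma>)
    then show ?case
      using assms K by (auto intro!: solves_IVP_positive[of N p \<gamma> "U \<gamma>" R K])
  qed
qed

theorem lemma6p1:
  fixes N :: nat and p :: real and U :: "real \<Rightarrow> real \<Rightarrow> real"
  assumes "N \<ge> 3" and "p > 1"
    and "\<And>\<gamma>. \<gamma> > 0 \<Longrightarrow> solves_IVP N p \<gamma> (U \<gamma>)"
  shows "((\<lambda>\<gamma>. first_zero (U \<gamma>)) \<longlongrightarrow> \<infinity>) (at_right 0)"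
  unfolding tendsto_PInfty
proof
  fix r :: real
  define R where "R = max r 0 + 1"
  have "\<forall>\<^sub>F \<gamma> in at_right 0. \<forall>x. 0 \<le> x \<and> x \<le> R \<longrightarrow> 0 < U \<gamma> x"
    using assms by (intro eventually_solves_IVP_positive_on[of N p R U]) (auto simp: R_def)
  then show "\<forall>\<^sub>F \<gamma> in at_right 0. ereal r < first_zero (U \<gamma>)"
  proof eventually_elim
    case (elim \<gamma>)
    then have "ereal R \<le> first_zero (U \<gamma>)"
      by (intro ereal_le_first_zero) (metis less_imp_le less_irrefl)
    then show ?case
      by (rule order.strict_trans2[rotated]) (simp add: R_def)
  qed
qed

end
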